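(* For every Büchi automaton $\mathcal{A}=(Q,Q_0,\delta,F)$ (deterministic or nondeterministic) over a finite alphabet $\Sigma$ and every bound $n\in\mathbb{N}$, there is a safety automaton $\mathcal{A}'$, which is deterministic if $\mathcal{A}$ is deterministic, with $n\cdot|Q\setminus F|^2+|F|$ states, such that $L(\mathcal{A}')\subseteq L(\mathcal{A})$ and $L_n(L(\mathcal{A}'))=L_n(L(\mathcal{A}))$.
   Context: A lasso of length $n$ is a pair $(u,v)$ with $u\in\Sigma^*$, $v\in\Sigma^+$, $|u\cdot v|=n$, inducing $u\cdot v^\omega$. For $\psi\subseteq\Sigma^\omega$, $L_n(\psi)=\{u\cdot v^\omega \in \psi \mid u\in\Sigma^*, v\in\Sigma^+, |u\cdot v|=n\}$. A nondeterministic Büchi automaton is $(Q,Q_0,\delta,F)$ with finite $Q$, $Q_0\subseteq Q$, $\delta:Q\times\Sigma\to\mathcal{P}(Q)$, $F\subseteq Q$; a run on $\alpha_1\alpha_2\cdots$ is $q_0q_1\cdots$ with $q_0\in Q_0$, $q_{i+1}\in\delta(q_i,\alpha_{i+1})$, accepting if it visits $F$ infinitely often. A safety automaton $(Q,Q_0,\delta)$ accepts a word iff it has an infinite run on it (every infinite run is accepting). An automaton is deterministic if $|Q_0|=1$ and $|\delta(q,\alpha)|\le1$ for all $q,\alpha$ (missing successors allowed). $L(\cdot)$ denotes the accepted language. *)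

theory Defs
  imports Main
begin

text \<open>Infinite words over the alphabet 'a are functions nat => 'a (position 0 is the first letter).
  The finite alphabet Sigma is the finite type 'a.\<close>

definition lasso :: "'a list \<Rightarrow> 'a list \<Rightarrow> (nat \<Rightarrow> 'a)" where
  "lasso u v = (\<lambda>i. if i < length u then u ! i else v ! ((i - length u) mod length v))"

definition lasso_lang :: "nat \<Rightarrow> (nat \<Rightarrow> 'a) set \<Rightarrow> (nat \<Rightarrow> 'a) set" where
  "lasso_lang n \<psi> = {w \<in> \<psi>. \<exists>u v. v \<noteq> [] \<and> length u + length v = n \<and> w = lasso u v}"

record ('q, 'a) nba =
  nba_states :: "'q set"
  nba_init :: "'q set"
  nba_trans :: "'q \<Rightarrow> 'a \<Rightarrow> 'q set"
  nba_acc :: "'q set"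

definition nba_wf :: "('q, 'a) nba \<Rightarrow> bool" where
  "nba_wf A \<longleftrightarrow> finite (nba_states A) \<and> nba_init A \<subseteq> nba_states A
     \<and> (\<forall>q \<in> nba_states A. \<forall>a. nba_trans A q a \<subseteq> nba_states A)
     \<and> nba_acc A \<subseteq> nba_states A"

definition nba_run :: "('q, 'a) nba \<Rightarrow> (nat \<Rightarrow> 'a) \<Rightarrow> (nat \<Rightarrow> 'q) \<Rightarrow> bool" where
  "nba_run A w r \<longleftrightarrow> r 0 \<in> nba_init A \<and> (\<forall>i. r (Suc i) \<in> nba_trans A (r i) (w i))"

definition nba_lang :: "('q, 'a) nba \<Rightarrow> (nat \<Rightarrow> 'a) set" where
  "nba_lang A = {w. \<exists>r. nba_run A w r \<and> (\<exists>\<^sub>\<infinity>i. r i \<in> nba_acc A)}"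

definition nba_det :: "('q, 'a) nba \<Rightarrow> bool" where
  "nba_det A \<longleftrightarrow> card (nba_init A) = 1 \<and> (\<forall>q \<in> nba_states A. \<forall>a. card (nba_trans A q a) \<le> 1)"

record ('q, 'a) sa =
  sa_states :: "'q set"
  sa_init :: "'q set"
  sa_trans :: "'q \<Rightarrow> 'a \<Rightarrow> 'q set"

definition sa_wf :: "('q, 'a) sa \<Rightarrow> bool" where
  "sa_wf A \<longleftrightarrow> finite (sa_states A) \<and> sa_init A \<subseteq> sa_states A
     \<and> (\<forall>q \<in> sa_states A. \<forall>a. sa_trans A q a \<subseteq> sa_states A)"

definition sa_run :: "('q, 'a) sa \<Rightarrow> (nat \<Rightarrow> 'a) \<Rightarrow> (nat \<Rightarrow> 'q) \<Rightarrow> bool" where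
  "sa_run A w r \<longleftrightarrow> r 0 \<in> sa_init A \<and> (\<forall>i. r (Suc i) \<in> sa_trans A (r i) (w i))"

definition sa_lang :: "('q, 'a) sa \<Rightarrow> (nat \<Rightarrow> 'a) set" where
  "sa_lang A = {w. \<exists>r. sa_run A w r}"

definition sa_det :: "('q, 'a) sa \<Rightarrow> bool" where
  "sa_det A \<longleftrightarrow> card (sa_init A) = 1 \<and> (\<forall>q \<in> sa_states A. \<forall>a. card (sa_trans A q a) \<le> 1)"

end

theory Submission
  imports Defs "HOL-Library.Infinite_Set"
begin

(* Let m = |Q - F| and N = n m. A safety automaton cannot check that F is visited infinitely
   often, but it can check that F is visited at least once in every N + 1 consecutive positions:
   run A together with a counter holding the current streak of non-accepting states, and block
   as soon as the counter would exceed N. This needs |F| + N m states, and every word accepted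
   this way is in L(A).

   Conversely, let u v^omega be in L(A) with |u v| = n. An accepting run is an infinite path visiting
   accepting vertices infinitely often in the finite graph of pairs (position in u v, state),
   which has n m non-accepting vertices. In a finite graph, a vertex with such a path also has one
   on which accepting vertices are never more than (number of non-accepting vertices) steps
   apart: always move to a vertex that still has such a path and is strictly closer to an
   accepting vertex that has one. Along the corresponding run the counter never exceeds N. *)

section \<open>Recurrent vertices of a graph\<close>

lemma INFM_nat_shift: "(\<exists>\<^sub>\<infinity>i. P (i + k)) \<longleftrightarrow> (\<exists>\<^sub>\<infinity>i::nat. P i)"
  unfolding frequently_def cofinite_eq_sequentially
  using eventually_sequentially_seg[of "\<lambda>i. \<not> P i"] by simp

definition recurrent :: "('v \<Rightarrow> 'v \<Rightarrow> bool) \<Rightarrow> 'v set \<Rightarrow> 'v \<Rightarrow> bool" where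
  "recurrent E T x \<longleftrightarrow> (\<exists>f. f 0 = x \<and> (\<forall>i. E (f i) (f (Suc i))) \<and> (\<exists>\<^sub>\<infinity>i. f i \<in> T))"

lemma recurrent_suffix:
  assumes "\<forall>i. E (f i) (f (Suc i))" and "\<exists>\<^sub>\<infinity>i. f i \<in> T"
  shows "recurrent E T (f k)"
  unfolding recurrent_def
proof (intro exI[of _ "\<lambda>i. f (i + k)"] conjI)
  show "\<forall>i. E (f (i + k)) (f (Suc i + k))" using assms(1) by simp
  show "\<exists>\<^sub>\<infinity>i. f (i + k) \<in> T" using assms(2) INFM_nat_shift[of "\<lambda>i. f i \<in> T"] by simp
qed simp

lemma recurrent_converse_step:
  assumes "E x y" and "recurrent E T y"
  shows "recurrent E T x"
proof -
  obtain f where f: "f 0 = y" "\<forall>i. E (f i) (f (Suc i))" "\<exists>\<^sub>\<infinity>i. f i \<in> T"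
    using assms(2) unfolding recurrent_def by blast
  show ?thesis
    unfolding recurrent_def
  proof (intro exI[of _ "case_nat x f"] conjI)
    show "\<forall>i. E (case_nat x f i) (case_nat x f (Suc i))"
      using assms(1) f by (auto split: nat.split)
    show "\<exists>\<^sub>\<infinity>i. case_nat x f i \<in> T"
      using f(3) INFM_nat_shift[of "\<lambda>i. case_nat x f i \<in> T" 1] by simp
  qed simp
qed

lemma recurrent_converse_relpowp:
  "(E ^^ k) x y \<Longrightarrow> recurrent E T y \<Longrightarrow> recurrent E T x"
proof (induction k arbitrary: x)
  case 0
  then show ?case by simp
next
  case (Suc k)
  then show ?case by (metis relpowp_Suc_E2 recurrent_converse_step)
qed

definition recurrent_dist :: "('v \<Rightarrow> 'v \<Rightarrow> bool) \<Rightarrow> 'v set \<Rightarrow> 'v \<Rightarrow> nat" where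
  "recurrent_dist E T x = (LEAST k. \<exists>y. (E ^^ k) x y \<and> y \<in> T \<and> recurrent E T y)"

lemma recurrent_reaches_recurrent_target:
  assumes "recurrent E T x"
  shows "\<exists>k y. (E ^^ k) x y \<and> y \<in> T \<and> recurrent E T y"
proof -
  obtain f where f: "f 0 = x" "\<forall>i. E (f i) (f (Suc i))" "\<exists>\<^sub>\<infinity>i. f i \<in> T"
    using assms unfolding recurrent_def by blast
  obtain k where "f k \<in> T" using frequently_ex[OF f(3)] by blast
  moreover have "(E ^^ k) x (f k)" using f(1,2) relpowp_fun_conv by metis
  ultimately show ?thesis using recurrent_suffix[OF f(2,3)] by blast
qed

lemma recurrent_successor:
  assumes "recurrent E T x"
  shows "\<exists>y. E x y \<and> recurrent E T y
           \<and> (x \<notin> T \<longrightarrow> recurrent_dist E T y < recurrent_dist E T x)"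
proof (cases "x \<in> T")
  case True
  obtain f where f: "f 0 = x" "\<forall>i. E (f i) (f (Suc i))" "\<exists>\<^sub>\<infinity>i. f i \<in> T"
    using assms unfolding recurrent_def by blast
  have "E x (f 1)" using f(1) f(2)[rule_format, of 0] by simp
  with True recurrent_suffix[OF f(2,3), of 1] show ?thesis by blast
next
  case False
  let ?reach = "\<lambda>x k. \<exists>y. (E ^^ k) x y \<and> y \<in> T \<and> recurrent E T y"
  have "?reach x (recurrent_dist E T x)"
    unfolding recurrent_dist_def
    using recurrent_reaches_recurrent_target[OF assms] by (rule LeastI_ex)
  then obtain y where y: "(E ^^ recurrent_dist E T x) x y" "y \<in> T" "recurrent E T y" by blast
  with False obtain k where k: "recurrent_dist E T x = Suc k"
    by (metis not0_implies_Suc relpowp_0_E)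
  then obtain z where z: "E x z" "(E ^^ k) z y" using y(1) by (metis relpowp_Suc_E2)
  have "recurrent_dist E T z \<le> k"
    unfolding recurrent_dist_def using z(2) y(2,3) by (blast intro: Least_le)
  then show ?thesis
    using z k recurrent_converse_relpowp[OF z(2) y(3)] by (intro exI[of _ z]) simp
qed

lemma recurrent_path_bounded_gaps:
  assumes "finite V" and "x \<in> V" and closed: "\<And>y z. y \<in> V \<Longrightarrow> E y z \<Longrightarrow> z \<in> V"
    and "recurrent E T x"
  shows "\<exists>p. p 0 = x \<and> (\<forall>i. E (p i) (p (Suc i))) \<and> (\<forall>i. \<exists>k\<le>card (V - T). p (i + k) \<in> T)"
proof -
  let ?d = "recurrent_dist E T" and ?K = "card (V - T)"
  have "\<exists>p. \<forall>i. (recurrent E T (p i) \<and> p i \<in> V \<and> (i = 0 \<longrightarrow> p i = x))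
      \<and> (E (p i) (p (Suc i)) \<and> (p i \<notin> T \<longrightarrow> ?d (p (Suc i)) < ?d (p i)))"
  proof (rule dependent_nat_choice)
    show "\<exists>y. recurrent E T y \<and> y \<in> V \<and> (0 = (0::nat) \<longrightarrow> y = x)"
      using assms by blast
  next
    fix y and i :: nat
    assume y: "recurrent E T y \<and> y \<in> V \<and> (i = 0 \<longrightarrow> y = x)"
    obtain z where z: "E y z" "recurrent E T z" "y \<notin> T \<longrightarrow> ?d z < ?d y"
      using recurrent_successor[of E T y] y by blast
    show "\<exists>z. (recurrent E T z \<and> z \<in> V \<and> (Suc i = 0 \<longrightarrow> z = x))
        \<and> (E y z \<and> (y \<notin> T \<longrightarrow> ?d z < ?d y))"
      using y z closed[of y z] by blast
  qed
  then obtain p where p: "\<And>i. recurrent E T (p i) \<and> p i \<in> V \<and> (i = 0 \<longrightarrow> p i = x)"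
      "\<And>i. E (p i) (p (Suc i)) \<and> (p i \<notin> T \<longrightarrow> ?d (p (Suc i)) < ?d (p i))"
    by blast
  have "\<exists>k\<le>?K. p (i + k) \<in> T" for i
  proof (rule ccontr)
    assume "\<not> ?thesis"
    then have outside: "p (i + k) \<in> V - T" if "k \<le> ?K" for k
      using p(1) that by auto
    let ?h = "\<lambda>k. ?d (p (i + k))"
    have descent: "?h (Suc k) < ?h k" if "k < ?K" for k
      using p(2)[of "i + k"] outside[of k] that by simp
    have strict: "?h l < ?h k" if "k < l" "l \<le> ?K" for k l
    proof -
      have "?h l \<le> ?h (Suc k)"
        using lift_Suc_antimono_le_ivl[of "{..<?K}" ?h "Suc k" l] descent that
        by (simp add: less_imp_le subset_eq)
      then show ?thesis using descent[of k] that by simp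
    qed
    have "inj_on (\<lambda>k. p (i + k)) {..?K}"
    proof (rule inj_onI)
      fix k l
      assume "k \<in> {..?K}" "l \<in> {..?K}" "p (i + k) = p (i + l)"
      then show "k = l" using strict[of k l] strict[of l k] by (cases k l rule: linorder_cases) auto
    qed
    then have "card {..?K} \<le> ?K"
      by (rule card_inj_on_le) (use outside \<open>finite V\<close> in auto)
    then show False by simp
  qed
  then show ?thesis using p by blast
qed

section \<open>Accepting runs with bounded gaps on lasso words\<close>

lemma nba_run_in_states:
  assumes "nba_wf A" and "nba_run A w r"
  shows "r i \<in> nba_states A"
  using assms unfolding nba_wf_def nba_run_def by (induction i) blast+

lemma accepting_run_bounded_gaps:
  fixes A :: "('q, 'a) nba" and \<sigma> :: "nat \<Rightarrow> 'p"
  assumes wf: "nba_wf A" and "w \<in> nba_lang A" and "finite (range \<sigma>)"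
    and \<sigma>_Suc: "\<And>i. \<sigma> (Suc i) = succ (\<sigma> i)" and w_\<sigma>: "\<And>i. w i = letter (\<sigma> i)"
  shows "\<exists>r. nba_run A w r \<and>
    (\<forall>i. \<exists>k\<le>card (range \<sigma>) * card (nba_states A - nba_acc A). r (i + k) \<in> nba_acc A)"
proof -
  let ?Q = "nba_states A" and ?F = "nba_acc A"
  define E where "E x y \<longleftrightarrow> fst y = succ (fst x) \<and> snd y \<in> nba_trans A (snd x) (letter (fst x))"
    for x y :: "'p \<times> 'q"
  obtain r where run: "nba_run A w r" and acc: "\<exists>\<^sub>\<infinity>i. r i \<in> ?F"
    using \<open>w \<in> nba_lang A\<close> unfolding nba_lang_def by blast
  have "\<forall>i. E (\<sigma> i, r i) (\<sigma> (Suc i), r (Suc i))"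
    using run \<sigma>_Suc w_\<sigma> unfolding E_def nba_run_def by simp
  moreover have "\<exists>\<^sub>\<infinity>i. (\<sigma> i, r i) \<in> range \<sigma> \<times> ?F"
    using acc by (rule INFM_mono) simp
  ultimately have rec: "recurrent E (range \<sigma> \<times> ?F) (\<sigma> 0, r 0)"
    by (rule recurrent_suffix[where f = "\<lambda>i. (\<sigma> i, r i)" and k = 0, simplified])
  have fin: "finite (range \<sigma> \<times> ?Q)"
    using wf \<open>finite (range \<sigma>)\<close> unfolding nba_wf_def by simp
  have start: "(\<sigma> 0, r 0) \<in> range \<sigma> \<times> ?Q"
    using nba_run_in_states[OF wf run] by simp
  have closed: "z \<in> range \<sigma> \<times> ?Q" if y: "y \<in> range \<sigma> \<times> ?Q" and yz: "E y z" for y z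
  proof -
    obtain j where j: "fst y = \<sigma> j" "snd y \<in> ?Q" using y by auto
    then have "snd z \<in> ?Q" using yz wf unfolding E_def nba_wf_def by blast
    moreover have "fst z = \<sigma> (Suc j)" using yz j \<sigma>_Suc unfolding E_def by simp
    ultimately show ?thesis by (simp add: mem_Times_iff)
  qed
  have "range \<sigma> \<times> ?Q - range \<sigma> \<times> ?F = range \<sigma> \<times> (?Q - ?F)"
    by auto
  then have card_eq: "card (range \<sigma> \<times> ?Q - range \<sigma> \<times> ?F) = card (range \<sigma>) * card (?Q - ?F)"
    by (simp add: card_cartesian_product)
  have "\<exists>p. p 0 = (\<sigma> 0, r 0) \<and> (\<forall>i. E (p i) (p (Suc i)))
      \<and> (\<forall>i. \<exists>k\<le>card (range \<sigma> \<times> ?Q - range \<sigma> \<times> ?F). p (i + k) \<in> range \<sigma> \<times> ?F)"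
    by (rule recurrent_path_bounded_gaps[of "range \<sigma> \<times> ?Q" _ E, OF fin start closed rec])
  then obtain p where p0: "p 0 = (\<sigma> 0, r 0)" and path: "\<forall>i. E (p i) (p (Suc i))"
    and gaps: "\<forall>i. \<exists>k\<le>card (range \<sigma>) * card (?Q - ?F). p (i + k) \<in> range \<sigma> \<times> ?F"
    unfolding card_eq by blast
  have fst_p: "fst (p i) = \<sigma> i" for i
    by (induction i) (use p0 path \<sigma>_Suc in \<open>auto simp: E_def\<close>)
  have "nba_run A w (snd \<circ> p)"
    using run p0 path fst_p w_\<sigma> unfolding nba_run_def E_def by simp
  moreover have "\<forall>i. \<exists>k\<le>card (range \<sigma>) * card (?Q - ?F). (snd \<circ> p) (i + k) \<in> ?F"
    using gaps by (fastforce simp: mem_Times_iff)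
  ultimately show ?thesis by blast
qed

definition lasso_pos :: "'a list \<Rightarrow> 'a list \<Rightarrow> nat \<Rightarrow> nat" where
  "lasso_pos u v i = (if i < length u then i else length u + (i - length u) mod length v)"

lemma lasso_pos_less: "v \<noteq> [] \<Longrightarrow> lasso_pos u v i < length u + length v"
  by (simp add: lasso_pos_def)

lemma lasso_lasso_pos: "lasso u v (lasso_pos u v i) = lasso u v i"
  by (simp add: lasso_def lasso_pos_def)

lemma lasso_pos_Suc: "lasso_pos u v (Suc i) = lasso_pos u v (Suc (lasso_pos u v i))"
proof (cases "i < length u")
  case False
  then have "Suc i - length u = Suc (i - length u)" by simp
  with False show ?thesis by (simp add: lasso_pos_def mod_Suc_eq)
qed (simp add: lasso_pos_def)

lemma lasso_accepting_run_bounded_gaps: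
  assumes wf: "nba_wf A" and "w \<in> lasso_lang n (nba_lang A)"
  shows "\<exists>r. nba_run A w r \<and>
    (\<forall>i. \<exists>k\<le>n * card (nba_states A - nba_acc A). r (i + k) \<in> nba_acc A)"
proof -
  obtain u v where v: "v \<noteq> []" and n: "length u + length v = n" and w: "w = lasso u v"
    and "w \<in> nba_lang A"
    using assms(2) unfolding lasso_lang_def by blast
  have range: "range (lasso_pos u v) \<subseteq> {..<n}"
    using lasso_pos_less[OF v] n by auto
  then have fin: "finite (range (lasso_pos u v))"
    by (rule finite_subset) simp
  have card: "card (range (lasso_pos u v)) \<le> n"
    using card_mono[OF finite_lessThan range] by simp
  have "\<exists>r. nba_run A w r \<and> (\<forall>i. \<exists>k\<le>card (range (lasso_pos u v)) * card (nba_states A - nba_acc A).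
      r (i + k) \<in> nba_acc A)"
    by (rule accepting_run_bounded_gaps[OF wf \<open>w \<in> nba_lang A\<close> fin,
          of "\<lambda>p. lasso_pos u v (Suc p)" "lasso u v"])
      (rule lasso_pos_Suc, simp add: w lasso_lasso_pos)
  then obtain r where "nba_run A w r"
    and gaps: "\<forall>i. \<exists>k\<le>card (range (lasso_pos u v)) * card (nba_states A - nba_acc A).
      r (i + k) \<in> nba_acc A"
    by blast
  moreover have "card (range (lasso_pos u v)) * card (nba_states A - nba_acc A)
      \<le> n * card (nba_states A - nba_acc A)"
    using card by (rule mult_le_mono1)
  ultimately show ?thesis by (meson order.trans)
qed

section \<open>Counting streaks of non-accepting states\<close>

definition streak_step :: "'q set \<Rightarrow> nat \<Rightarrow> 'q \<Rightarrow> nat" where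
  "streak_step F c q = (if q \<in> F then 0 else Suc c)"

primrec streak :: "'q set \<Rightarrow> (nat \<Rightarrow> 'q) \<Rightarrow> nat \<Rightarrow> nat" where
  "streak F r 0 = streak_step F 0 (r 0)"
| "streak F r (Suc i) = streak_step F (streak F r i) (r (Suc i))"

lemma streak_step_eq_0_iff [simp]: "streak_step F c q = 0 \<longleftrightarrow> q \<in> F"
  by (simp add: streak_step_def)

lemma streak_outside: "j < streak F r i \<Longrightarrow> j \<le> i \<and> r (i - j) \<notin> F"
proof (induction i arbitrary: j)
  case 0
  then show ?case by (simp add: streak_step_def split: if_splits)
next
  case (Suc i)
  then show ?case by (cases j) (auto simp: streak_step_def split: if_splits)
qed

lemma streak_ge: "(\<And>k. k \<le> K \<Longrightarrow> r (i + k) \<notin> F) \<Longrightarrow> K < streak F r (i + K)"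
proof (induction K)
  case 0
  then show ?case by (cases i) (simp_all add: streak_step_def)
next
  case (Suc K)
  have "K < streak F r (i + K)" using Suc by simp
  moreover have "r (Suc (i + K)) \<notin> F" using Suc.prems[of "Suc K"] by simp
  ultimately show ?case by (simp add: streak_step_def)
qed

lemma streak_bounded_iff: "(\<forall>i. streak F r i \<le> N) \<longleftrightarrow> (\<forall>i. \<exists>k\<le>N. r (i + k) \<in> F)"
proof
  assume bounded: "\<forall>i. streak F r i \<le> N"
  show "\<forall>i. \<exists>k\<le>N. r (i + k) \<in> F"
  proof (rule ccontr)
    assume "\<not> (\<forall>i. \<exists>k\<le>N. r (i + k) \<in> F)"
    then obtain i where "\<And>k. k \<le> N \<Longrightarrow> r (i + k) \<notin> F" by blast
    then have "N < streak F r (i + N)" by (rule streak_ge)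
    with bounded show False by (meson not_le)
  qed
next
  assume gaps: "\<forall>i. \<exists>k\<le>N. r (i + k) \<in> F"
  show "\<forall>i. streak F r i \<le> N"
  proof (rule ccontr)
    assume "\<not> (\<forall>i. streak F r i \<le> N)"
    then obtain i where long: "N < streak F r i" by (meson not_le)
    then have "N \<le> i" using streak_outside by blast
    obtain k where "k \<le> N" "r (i - N + k) \<in> F" using gaps by blast
    moreover have "r (i - (N - k)) \<notin> F" using streak_outside[of "N - k" F r i] long by simp
    ultimately show False using \<open>N \<le> i\<close> by (simp add: Nat.diff_diff_right)
  qed
qed

definition streak_sa :: "('q, 'a) nba \<Rightarrow> nat \<Rightarrow> ('q \<times> nat, 'a) sa" where
  "streak_sa A N = \<lparr>
     sa_states = {(q, c). q \<in> nba_states A \<and> c \<le> N \<and> (c = 0 \<longleftrightarrow> q \<in> nba_acc A)},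
     sa_init = {(q, c). q \<in> nba_init A \<and> c = streak_step (nba_acc A) 0 q \<and> c \<le> N},
     sa_trans = (\<lambda>(q, c) a. {(q', c'). q' \<in> nba_trans A q a \<and> c' = streak_step (nba_acc A) c q' \<and> c' \<le> N})\<rparr>"

lemma INFM_if_bounded_gaps:
  fixes P :: "nat \<Rightarrow> bool"
  assumes "\<forall>i. \<exists>k\<le>N. P (i + k)"
  shows "\<exists>\<^sub>\<infinity>i. P i"
  unfolding INFM_nat_le
proof
  fix m
  obtain k where "P (m + k)" using assms by blast
  then show "\<exists>n\<ge>m. P n" by (intro exI[of _ "m + k"]) simp
qed

lemma streak_sa_init_iff:
  "(q, c) \<in> sa_init (streak_sa A N)
    \<longleftrightarrow> q \<in> nba_init A \<and> c = streak_step (nba_acc A) 0 q \<and> c \<le> N"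
  by (simp add: streak_sa_def)

lemma streak_sa_trans_iff:
  "(q', c') \<in> sa_trans (streak_sa A N) (q, c) a
    \<longleftrightarrow> q' \<in> nba_trans A q a \<and> c' = streak_step (nba_acc A) c q' \<and> c' \<le> N"
  by (simp add: streak_sa_def)

lemma sa_lang_streak_sa:
  "sa_lang (streak_sa A N) = {w. \<exists>r. nba_run A w r \<and> (\<forall>i. \<exists>k\<le>N. r (i + k) \<in> nba_acc A)}"
proof (intro set_eqI iffI; clarsimp simp flip: streak_bounded_iff)
  let ?F = "nba_acc A"
  fix w
  assume "w \<in> sa_lang (streak_sa A N)"
  then obtain \<rho> where \<rho>: "sa_run (streak_sa A N) w \<rho>" unfolding sa_lang_def by blast
  define r c where "r = fst \<circ> \<rho>" and "c = snd \<circ> \<rho>"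
  have "(r 0, c 0) \<in> sa_init (streak_sa A N)"
    and "(r (Suc i), c (Suc i)) \<in> sa_trans (streak_sa A N) (r i, c i) (w i)" for i
    using \<rho> unfolding sa_run_def r_def c_def by simp_all
  then have init: "r 0 \<in> nba_init A" "c 0 = streak_step ?F 0 (r 0)" "c 0 \<le> N"
    and step: "\<And>i. r (Suc i) \<in> nba_trans A (r i) (w i)"
      "\<And>i. c (Suc i) = streak_step ?F (c i) (r (Suc i))" "\<And>i. c (Suc i) \<le> N"
    unfolding streak_sa_init_iff streak_sa_trans_iff by blast+
  have "c i = streak ?F r i" for i
    by (induction i) (simp_all add: init step)
  moreover have "c i \<le> N" for i
    using init step by (cases i) auto
  moreover have "nba_run A w r"
    unfolding nba_run_def using init step by simp
  ultimately show "\<exists>r. nba_run A w r \<and> (\<forall>i. streak ?F r i \<le> N)" by metis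
next
  fix w r
  assume run: "nba_run A w r" and bounded: "\<forall>i. streak (nba_acc A) r i \<le> N"
  then have "sa_run (streak_sa A N) w (\<lambda>i. (r i, streak (nba_acc A) r i))"
    unfolding sa_run_def nba_run_def streak_sa_init_iff streak_sa_trans_iff
    by (metis streak.simps)
  then show "w \<in> sa_lang (streak_sa A N)" unfolding sa_lang_def by blast
qed

lemma sa_lang_streak_sa_subset: "sa_lang (streak_sa A N) \<subseteq> nba_lang A"
proof
  fix w
  assume "w \<in> sa_lang (streak_sa A N)"
  then obtain r where "nba_run A w r" and gaps: "\<forall>i. \<exists>k\<le>N. r (i + k) \<in> nba_acc A"
    unfolding sa_lang_streak_sa by blast
  with INFM_if_bounded_gaps[OF gaps] show "w \<in> nba_lang A"
    unfolding nba_lang_def by blast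
qed

lemma lasso_lang_subset_sa_lang_streak_sa:
  assumes "nba_wf A"
  shows "lasso_lang n (nba_lang A) \<subseteq> sa_lang (streak_sa A (n * card (nba_states A - nba_acc A)))"
  unfolding sa_lang_streak_sa using lasso_accepting_run_bounded_gaps[OF assms, of _ n] by blast

lemma sa_wf_streak_sa:
  assumes "nba_wf A"
  shows "sa_wf (streak_sa A N)"
proof -
  have "sa_states (streak_sa A N) \<subseteq> nba_states A \<times> {..N}"
    by (auto simp: streak_sa_def)
  then have "finite (sa_states (streak_sa A N))"
    using assms unfolding nba_wf_def by (auto intro: finite_subset)
  then show ?thesis
    using assms unfolding sa_wf_def nba_wf_def streak_sa_def by auto
qed

lemma card_streak_sa_states:
  assumes "nba_wf A"
  shows "card (sa_states (streak_sa A N))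
    = card (nba_acc A) + card (nba_states A - nba_acc A) * N"
proof -
  let ?Q = "nba_states A" and ?F = "nba_acc A"
  have fin: "finite ?Q" and "?F \<subseteq> ?Q" using assms unfolding nba_wf_def by blast+
  then have states: "sa_states (streak_sa A N) = ?F \<times> {0} \<union> (?Q - ?F) \<times> {1..N}"
    by (auto simp: streak_sa_def)
  have "finite ?F" using fin \<open>?F \<subseteq> ?Q\<close> by (rule finite_subset[rotated])
  have "card (?F \<times> {0} \<union> (?Q - ?F) \<times> {1..N}) = card (?F \<times> {0::nat}) + card ((?Q - ?F) \<times> {1..N})"
    by (rule card_Un_disjoint) (use fin \<open>finite ?F\<close> in auto)
  then show ?thesis
    unfolding states by (simp add: card_cartesian_product)
qed

lemma sa_det_streak_sa:
  assumes wf: "nba_wf A" and det: "nba_det A" and "nba_init A \<subseteq> nba_acc A \<or> 0 < N"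
  shows "sa_det (streak_sa A N)"
proof -
  let ?F = "nba_acc A"
  obtain q0 where q0: "nba_init A = {q0}"
    using det card_1_singletonE unfolding nba_det_def by blast
  with assms(3) have "sa_init (streak_sa A N) = {(q0, streak_step ?F 0 q0)}"
    by (auto simp: streak_sa_def streak_step_def)
  moreover have "card (sa_trans (streak_sa A N) s a) \<le> 1"
    if state: "s \<in> sa_states (streak_sa A N)" for s a
  proof -
    obtain q c where s: "s = (q, c)" and q: "q \<in> nba_states A"
      using state by (auto simp: streak_sa_def)
    have fin: "finite (nba_trans A q a)"
      using wf q unfolding nba_wf_def by (meson finite_subset)
    have "sa_trans (streak_sa A N) s a \<subseteq> (\<lambda>q'. (q', streak_step ?F c q')) ` nba_trans A q a"
      by (auto simp: streak_sa_def s)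
    then have "card (sa_trans (streak_sa A N) s a) \<le> card (nba_trans A q a)"
      using fin by (meson card_image_le card_mono finite_imageI order_trans)
    also have "\<dots> \<le> 1"
      using det q unfolding nba_det_def by blast
    finally show ?thesis .
  qed
  ultimately show ?thesis unfolding sa_det_def by simp
qed

section \<open>Renaming the states of a safety automaton\<close>

(* Off the image h ` sa_states B the transitions are junk; no run ever gets there. *)
definition sa_rename :: "('s \<Rightarrow> 't) \<Rightarrow> ('s, 'a) sa \<Rightarrow> ('t, 'a) sa" where
  "sa_rename h B = \<lparr>sa_states = h ` sa_states B, sa_init = h ` sa_init B,
     sa_trans = (\<lambda>p a. h ` sa_trans B (inv_into (sa_states B) h p) a)\<rparr>"

lemma sa_run_in_states:
  assumes "sa_wf B" and "sa_run B w r"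
  shows "r i \<in> sa_states B"
  using assms unfolding sa_wf_def sa_run_def by (induction i) blast+

lemma sa_wf_sa_rename: "sa_wf B \<Longrightarrow> sa_wf (sa_rename h B)"
  unfolding sa_wf_def sa_rename_def by (auto simp: image_mono inv_into_into)

lemma sa_det_sa_rename:
  assumes "sa_wf B" and "inj_on h (sa_states B)" and "sa_det B"
  shows "sa_det (sa_rename h B)"
proof -
  have "card (h ` sa_init B) = card (sa_init B)"
    using assms(1,2) unfolding sa_wf_def by (meson card_image inj_on_subset)
  moreover have "card (h ` sa_trans B q a) \<le> 1" if "q \<in> sa_states B" for q a
  proof -
    have "finite (sa_trans B q a)"
      using assms(1) that unfolding sa_wf_def by (meson finite_subset)
    then have "card (h ` sa_trans B q a) \<le> card (sa_trans B q a)" by (rule card_image_le)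
    also have "\<dots> \<le> 1" using assms(3) that unfolding sa_det_def by blast
    finally show ?thesis .
  qed
  ultimately show ?thesis
    using assms(3) unfolding sa_det_def sa_rename_def by (auto simp: inv_into_into)
qed

lemma sa_lang_sa_rename:
  assumes wf: "sa_wf B" and inj: "inj_on h (sa_states B)"
  shows "sa_lang (sa_rename h B) = sa_lang B"
proof (intro set_eqI iffI)
  let ?S = "sa_states B" and ?h' = "inv_into (sa_states B) h"
  have init: "sa_init B \<subseteq> ?S" and trans: "\<And>q a. q \<in> ?S \<Longrightarrow> sa_trans B q a \<subseteq> ?S"
    using wf unfolding sa_wf_def by blast+
  fix w
  {
    assume "w \<in> sa_lang B"
    then obtain r where r: "sa_run B w r" unfolding sa_lang_def by blast
    then have "sa_run (sa_rename h B) w (h \<circ> r)"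
      using sa_run_in_states[OF wf r] inj unfolding sa_run_def sa_rename_def by simp
    then show "w \<in> sa_lang (sa_rename h B)" unfolding sa_lang_def by blast
  next
    assume "w \<in> sa_lang (sa_rename h B)"
    then obtain r where r: "sa_run (sa_rename h B) w r" unfolding sa_lang_def by blast
    then have r0: "r 0 \<in> h ` sa_init B"
      and step: "\<And>i. r (Suc i) \<in> h ` sa_trans B (?h' (r i)) (w i)"
      unfolding sa_run_def sa_rename_def by simp_all
    have "r i \<in> h ` ?S" for i
    proof (induction i)
      case 0
      then show ?case using r0 init by blast
    next
      case (Suc i)
      then have "?h' (r i) \<in> ?S" by (rule inv_into_into)
      then show ?case using step[of i] trans by blast
    qed
    then have in_S: "?h' (r i) \<in> ?S" for i by (rule inv_into_into)
    have "sa_run B w (?h' \<circ> r)"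
      unfolding sa_run_def
    proof (intro conjI allI)
      obtain q where "q \<in> sa_init B" "r 0 = h q" using r0 by blast
      then show "(?h' \<circ> r) 0 \<in> sa_init B" using init inj by (auto simp: inv_into_f_f)
    next
      fix i
      obtain q where q: "q \<in> sa_trans B (?h' (r i)) (w i)" "r (Suc i) = h q"
        using step[of i] by blast
      moreover have "q \<in> ?S" using q(1) trans[OF in_S] by blast
      ultimately show "(?h' \<circ> r) (Suc i) \<in> sa_trans B ((?h' \<circ> r) i) (w i)"
        using inj by (simp add: inv_into_f_f)
    qed
    then show "w \<in> sa_lang B" unfolding sa_lang_def by blast
  }
qed

lemma ex_sa_nat_states:
  fixes B :: "('s, 'a) sa"
  assumes "sa_wf B"
  shows "\<exists>B' :: (nat, 'a) sa. sa_wf B' \<and> card (sa_states B') = card (sa_states B)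
    \<and> (sa_det B \<longrightarrow> sa_det B') \<and> sa_lang B' = sa_lang B"
proof -
  have "finite (sa_states B)"
    using assms unfolding sa_wf_def by blast
  then obtain h :: "'s \<Rightarrow> nat" where inj: "inj_on h (sa_states B)"
    by (metis finite_imp_inj_to_nat_seg)
  show ?thesis
  proof (intro exI conjI)
    show "card (sa_states (sa_rename h B)) = card (sa_states B)"
      using inj by (simp add: sa_rename_def card_image)
  qed (use assms inj sa_wf_sa_rename sa_det_sa_rename sa_lang_sa_rename in blast)+
qed

lemma lasso_lang_eqI:
  assumes "L' \<subseteq> L" and "lasso_lang n L \<subseteq> L'"
  shows "lasso_lang n L' = lasso_lang n L"
  using assms unfolding lasso_lang_def by blast

theorem theorem3:
  fixes A :: "('q, 'a::finite) nba" and n :: nat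
  assumes "nba_wf A" and "n \<ge> 1"
  shows "\<exists>A' :: (nat, 'a) sa.
           sa_wf A'
         \<and> card (sa_states A') = n * card (nba_states A - nba_acc A) ^ 2 + card (nba_acc A)
         \<and> (nba_det A \<longrightarrow> sa_det A')
         \<and> sa_lang A' \<subseteq> nba_lang A
         \<and> lasso_lang n (sa_lang A') = lasso_lang n (nba_lang A)"
proof -
  let ?Q = "nba_states A" and ?F = "nba_acc A"
  define N where "N = n * card (?Q - ?F)"
  let ?B = "streak_sa A N"
  have "nba_init A \<subseteq> ?F \<or> 0 < N"
    using assms unfolding nba_wf_def N_def by (cases "?Q - ?F = {}") (auto simp: card_gt_0_iff)
  then have det: "nba_det A \<longrightarrow> sa_det ?B"
    using sa_det_streak_sa[OF assms(1)] by blast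
  have card: "card (sa_states ?B) = n * card (?Q - ?F) ^ 2 + card ?F"
    unfolding card_streak_sa_states[OF assms(1)] N_def by (simp add: power2_eq_square)
  have lasso: "lasso_lang n (sa_lang ?B) = lasso_lang n (nba_lang A)"
    using sa_lang_streak_sa_subset lasso_lang_subset_sa_lang_streak_sa[OF assms(1)]
    unfolding N_def by (rule lasso_lang_eqI)
  obtain A' :: "(nat, 'a) sa" where "sa_wf A'" "card (sa_states A') = card (sa_states ?B)"
    "sa_det ?B \<longrightarrow> sa_det A'" "sa_lang A' = sa_lang ?B"
    using ex_sa_nat_states[OF sa_wf_streak_sa[OF assms(1)]] by blast
  with sa_lang_streak_sa_subset det card lasso show ?thesis
    by (intro exI[of _ A']) simp
qed

end
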